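(* Let $\Theta$, $K$ (with worlds $W$) and $\eta:W\to\mathfrak M$ be as follows: $K$ is a Kripke model for $\mathcal L_\Box$ in which $w\Vdash\phi\to\Box\psi$ for every $\phi\triangleright\psi\in\Theta$ and every world $w$, and $\eta(w)$ is the model of $\mathfrak L$ determined by $\{a\in\mathfrak L: w\Vdash a\}$. Then for every world $w$ of $K$ and every non-modal $p\in\mathfrak L$, if $\eta(w)\Vdash\Box p$ in $K_\Theta$, then $w\Vdash\Box p$ in $K$.
   Context: $\mathfrak L$ is a classical propositional language; $\mathfrak M$ is the set of models (valuations) of $\mathfrak L$. A causal rule is $\phi\triangleright\psi$ with $\phi,\psi\in\mathfrak L$; a causal theory $\Theta$ is a set of causal rules. $R_\Theta$ on $\mathfrak M$: $M\,R_\Theta\,M'$ iff for every $\phi\triangleright\psi\in\Theta$, $M\Vdash\phi$ implies $M'\Vdash\psi$. $\mathcal L_\Box$ is generated by $\mathfrak L$ and a unary operator $\Box$. A Kripke model for $\mathcal L_\Box$: worlds, accessibility relation, valuation of atoms at each world; Boolean connectives classical; $w\Vdash\Box p$ iff $p$ holds at all accessible worlds. $K_\Theta$ is the Kripke model with worlds $\mathfrak M$, accessibility $R_\Theta$, and atoms forced as in the valuation. *)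

theory Defs
  imports Main
begin

datatype 'a pform = PAtom 'a | PBot | PNeg "'a pform" | PAnd "'a pform" "'a pform"
  | POr "'a pform" "'a pform" | PImp "'a pform" "'a pform"

type_synonym 'a pmodel = "'a \<Rightarrow> bool"

fun psat :: "'a pmodel \<Rightarrow> 'a pform \<Rightarrow> bool" where
  "psat M (PAtom a) = M a"
| "psat M PBot = False"
| "psat M (PNeg f) = (\<not> psat M f)"
| "psat M (PAnd f g) = (psat M f \<and> psat M g)"
| "psat M (POr f g) = (psat M f \<or> psat M g)"
| "psat M (PImp f g) = (psat M f \<longrightarrow> psat M g)"

text \<open>Causal rules phi |> psi are pairs; a causal theory is a set of them.\<close>
type_synonym 'a causal_theory = "('a pform \<times> 'a pform) set"

definition R_Theta :: "'a causal_theory \<Rightarrow> 'a pmodel \<Rightarrow> 'a pmodel \<Rightarrow> bool" where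
  "R_Theta \<Theta> M M' \<longleftrightarrow> (\<forall>(\<phi>, \<psi>) \<in> \<Theta>. psat M \<phi> \<longrightarrow> psat M' \<psi>)"

datatype 'a mform = MAtom 'a | MBot | MNeg "'a mform" | MAnd "'a mform" "'a mform"
  | MOr "'a mform" "'a mform" | MImp "'a mform" "'a mform" | Box "'a mform"

fun embed :: "'a pform \<Rightarrow> 'a mform" where
  "embed (PAtom a) = MAtom a"
| "embed PBot = MBot"
| "embed (PNeg f) = MNeg (embed f)"
| "embed (PAnd f g) = MAnd (embed f) (embed g)"
| "embed (POr f g) = MOr (embed f) (embed g)"
| "embed (PImp f g) = MImp (embed f) (embed g)"

fun kforce :: "'w set \<Rightarrow> ('w \<Rightarrow> 'w \<Rightarrow> bool) \<Rightarrow> ('w \<Rightarrow> 'a \<Rightarrow> bool) \<Rightarrow> 'w \<Rightarrow> 'a mform \<Rightarrow> bool" where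
  "kforce W Rel V w (MAtom a) = V w a"
| "kforce W Rel V w MBot = False"
| "kforce W Rel V w (MNeg f) = (\<not> kforce W Rel V w f)"
| "kforce W Rel V w (MAnd f g) = (kforce W Rel V w f \<and> kforce W Rel V w g)"
| "kforce W Rel V w (MOr f g) = (kforce W Rel V w f \<or> kforce W Rel V w g)"
| "kforce W Rel V w (MImp f g) = (kforce W Rel V w f \<longrightarrow> kforce W Rel V w g)"
| "kforce W Rel V w (Box f) = (\<forall>v\<in>W. Rel w v \<longrightarrow> kforce W Rel V v f)"

abbreviation K_Theta_force :: "'a causal_theory \<Rightarrow> 'a pmodel \<Rightarrow> 'a mform \<Rightarrow> bool" where
  "K_Theta_force \<Theta> \<equiv> kforce UNIV (R_Theta \<Theta>) (\<lambda>M. M)"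

definition eta :: "('w \<Rightarrow> 'a \<Rightarrow> bool) \<Rightarrow> 'w \<Rightarrow> 'a pmodel" where
  "eta V w = (\<lambda>a. V w a)"

end

theory Submission
  imports Defs
begin

(* Forcing of a non-modal formula at a world depends only on
   the atoms true there, so a world w of any Kripke model forces embed p exactly
   when the propositional model eta(w) satisfies p; in K_Theta the same holds with
   eta replaced by the identity.  The hypothesis that every world forces
   phi --> Box psi for each rule phi |> psi makes eta a homomorphism of frames:
   if w accesses v in K, then eta(w) R_Theta eta(v).  Hence every successor v of w
   has eta(v) among the R_Theta-successors of eta(w), all of which satisfy p by
   assumption, so v forces p.  The file proves the two transfer lemmas for
   non-modal formulas, then the frame-homomorphism lemma, and derives the theorem. *)

lemma kforce_embed_eta: "kforce W Rel V w (embed f) \<longleftrightarrow> psat (eta V w) f"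
  by (induction f) (auto simp: eta_def)

lemma K_Theta_force_embed: "K_Theta_force \<Theta> M (embed f) \<longleftrightarrow> psat M f"
  by (induction f) auto

lemma eta_preserves_accessibility:
  assumes rules: "\<And>\<phi> \<psi> w. (\<phi>, \<psi>) \<in> \<Theta> \<Longrightarrow> w \<in> W \<Longrightarrow>
                    kforce W Rel V w (MImp (embed \<phi>) (Box (embed \<psi>)))"
    and "w \<in> W" "v \<in> W" "Rel w v"
  shows "R_Theta \<Theta> (eta V w) (eta V v)"
  unfolding R_Theta_def
proof (intro ballI, clarify)
  fix \<phi> \<psi>
  assume "(\<phi>, \<psi>) \<in> \<Theta>" and "psat (eta V w) \<phi>"
  then have "kforce W Rel V w (Box (embed \<psi>))"
    using rules[of \<phi> \<psi> w] \<open>w \<in> W\<close> by (simp add: kforce_embed_eta)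
  with \<open>v \<in> W\<close> \<open>Rel w v\<close> show "psat (eta V v) \<psi>"
    by (simp add: kforce_embed_eta)
qed

theorem mainTheorem6:
  fixes \<Theta> :: "'a causal_theory"
    and W :: "'w set" and Rel :: "'w \<Rightarrow> 'w \<Rightarrow> bool" and V :: "'w \<Rightarrow> 'a \<Rightarrow> bool"
  assumes rules: "\<And>\<phi> \<psi> w. (\<phi>, \<psi>) \<in> \<Theta> \<Longrightarrow> w \<in> W \<Longrightarrow>
                    kforce W Rel V w (MImp (embed \<phi>) (Box (embed \<psi>)))"
    and wW: "w \<in> W"
    and hyp: "K_Theta_force \<Theta> (eta V w) (Box (embed p))"
  shows "kforce W Rel V w (Box (embed p))"
proof -
  have "kforce W Rel V v (embed p)" if "v \<in> W" "Rel w v" for v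
  proof -
    have "R_Theta \<Theta> (eta V w) (eta V v)"
      using eta_preserves_accessibility[OF rules wW that] .
    with hyp have "psat (eta V v) p"
      by (simp add: K_Theta_force_embed)
    then show ?thesis
      by (simp add: kforce_embed_eta)
  qed
  then show ?thesis by simp
qed

end
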